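(* Let $\Omega\subset\mathbb R^d$ be compact with nonempty interior. Then the set of restrictions to $\Omega$ of the maps $$\mathbf x\mapsto \mathbf W^T\,\mathrm{ReLU}(\mathbf W\mathbf x-\mathbf b),\qquad p\in\mathbb N,\ \mathbf W\in\mathbb R^{p\times d},\ \mathbf b\in\mathbb R^p,$$ (with $\mathrm{ReLU}(t)=\max(t,0)$ applied componentwise) is not dense in $\mathcal E(\Omega)$ with respect to the norm $\|\mathbf f\|_{C(\Omega)}=\sup_{\mathbf x\in\Omega}\|\mathbf f(\mathbf x)\|$.
   Context: $C^{0,1}_{\uparrow}(\mathbb R)$ denotes the set of Lipschitz-continuous increasing functions $\mathbb R\to\mathbb R$. $\mathcal E(\mathbb R^d)$ is the set of maps $\mathbf x\mapsto\mathbf W^T\boldsymbol\sigma(\mathbf W\mathbf x)$ with $p\in\mathbb N$, $\mathbf W\in\mathbb R^{p\times d}$, and $\boldsymbol\sigma$ acting componentwise as $(\boldsymbol\sigma(\mathbf z))_i=\sigma_i(z_i)$ with each $\sigma_i\in C^{0,1}_{\uparrow}(\mathbb R)$; $\mathcal E(\Omega)$ is the set of restrictions to $\Omega$ of elements of $\mathcal E(\mathbb R^d)$. *)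

theory Defs
  imports "HOL-Analysis.Analysis"
begin

definition lip_incr :: "(real \<Rightarrow> real) \<Rightarrow> bool" where
  "lip_incr \<sigma> \<longleftrightarrow> mono \<sigma> \<and> (\<exists>L. L-lipschitz_on UNIV \<sigma>)"

text \<open>E(R^d): maps x |-> W^T sigma(W x), where the p x d matrix W is given by
  its rows w 0, ..., w (p-1); then W^T sigma(W x) = sum_{i<p} sigma_i(w_i . x) w_i.\<close>
definition E_Rd :: "((real^'d) \<Rightarrow> real^'d) set" where
  "E_Rd = {f. \<exists>(p::nat) (w::nat \<Rightarrow> real^'d) (\<sigma>::nat \<Rightarrow> real \<Rightarrow> real).
              (\<forall>i<p. lip_incr (\<sigma> i)) \<and>
              f = (\<lambda>x. \<Sum>i<p. \<sigma> i (w i \<bullet> x) *\<^sub>R w i)}"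

definition E_on :: "(real^'d) set \<Rightarrow> ((real^'d) \<Rightarrow> real^'d) set" where
  "E_on \<Omega> = (\<lambda>f. restrict f \<Omega>) ` E_Rd"

definition relu_on :: "(real^'d) set \<Rightarrow> ((real^'d) \<Rightarrow> real^'d) set" where
  "relu_on \<Omega> = (\<lambda>f. restrict f \<Omega>) `
     {f. \<exists>(p::nat) (w::nat \<Rightarrow> real^'d) (b::nat \<Rightarrow> real).
            f = (\<lambda>x. \<Sum>i<p. max (w i \<bullet> x - b i) 0 *\<^sub>R w i)}"

definition sup_dist :: "'a set \<Rightarrow> ('a \<Rightarrow> 'b::real_normed_vector) \<Rightarrow> ('a \<Rightarrow> 'b) \<Rightarrow> real" where
  "sup_dist \<Omega> f g = (SUP x\<in>\<Omega>. norm (f x - g x))"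

end

theory Submission
  imports Defs
begin

text \<open>Along a line \<open>x0 + t e\<close>, the \<open>e\<close>-component of a ReLU network
  \<open>\<Sum>i. max (w i \<bullet> x - b i) 0 *\<^sub>R w i\<close> is a sum of profiles \<open>a * max (a t + \<beta>) 0\<close>
  with \<open>a = w i \<bullet> e\<close>. Each profile is nondecreasing and convex (\<open>a \<ge> 0\<close>) or
  concave (\<open>a \<le> 0\<close>), hence satisfies the linear inequality
  \<open>f (t + h) - f t \<le> (f t - f (t - h)) + (f (t + 2h) - f (t + h))\<close>, and so does the sum.
  The ramp \<open>min (max t 0) d\<close> has middle increment \<open>d\<close> and neighbouring increments \<open>0\<close>
  at \<open>t = 0, h = d\<close>, so no such sum comes within \<open>d/6\<close> of it at the four points
  \<open>-d, 0, d, 2d\<close>. The ridge function with that ramp profile lies in \<open>E\<close>, and placing the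
  four points inside a ball in \<open>\<Omega>\<close> separates it from all ReLU networks.\<close>

definition middle_increment_bounded :: "(real \<Rightarrow> real) \<Rightarrow> bool" where
  "middle_increment_bounded f \<longleftrightarrow>
     (\<forall>t h. 0 \<le> h \<longrightarrow> f (t + h) - f t \<le> (f t - f (t - h)) + (f (t + 2 * h) - f (t + h)))"

lemma convex_on_max:
  assumes "convex_on S f" and "convex_on S g"
  shows "convex_on S (\<lambda>x. max (f x) (g x))"
  unfolding convex_on_def
proof (intro conjI ballI allI impI)
  show "convex S" using assms(1) by (rule convex_on_imp_convex)
  fix x y and u v :: real
  assume xy: "x \<in> S" "y \<in> S" and uv: "0 \<le> u" "0 \<le> v" "u + v = 1"
  have "f (u *\<^sub>R x + v *\<^sub>R y) \<le> u * max (f x) (g x) + v * max (f y) (g y)"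
    using convex_onD[OF assms(1), of v x y] xy uv
    by (smt (verit) mult_left_mono max.cobounded1)
  moreover have "g (u *\<^sub>R x + v *\<^sub>R y) \<le> u * max (f x) (g x) + v * max (f y) (g y)"
    using convex_onD[OF assms(2), of v x y] xy uv
    by (smt (verit) mult_left_mono max.cobounded2)
  ultimately show "max (f (u *\<^sub>R x + v *\<^sub>R y)) (g (u *\<^sub>R x + v *\<^sub>R y))
      \<le> u * max (f x) (g x) + v * max (f y) (g y)"
    by simp
qed

lemma convex_on_affine_real: "convex_on UNIV (\<lambda>t::real. a * t + b)"
  by (simp add: convex_on_def algebra_simps flip: distrib_left distrib_right)

lemma mono_relu_ridge: "mono (\<lambda>t::real. a * max (a * t + b) 0)"
proof (rule monoI)
  fix s t :: real
  assume "s \<le> t"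
  show "a * max (a * s + b) 0 \<le> a * max (a * t + b) 0"
  proof (cases "0 \<le> a")
    case True
    then have "a * s \<le> a * t" using \<open>s \<le> t\<close> by (simp add: mult_left_mono)
    then have "max (a * s + b) 0 \<le> max (a * t + b) 0" by simp
    then show ?thesis using True by (rule mult_left_mono)
  next
    case False
    then have "a * t \<le> a * s" using \<open>s \<le> t\<close> by (simp add: mult_left_mono_neg)
    then have "max (a * t + b) 0 \<le> max (a * s + b) 0" by simp
    then show ?thesis using False by (simp add: mult_left_mono_neg)
  qed
qed

lemma convex_on_relu_ridge:
  assumes "0 \<le> a"
  shows "convex_on UNIV (\<lambda>t::real. a * max (a * t + b) 0)"
  using assms convex_on_max[OF convex_on_affine_real convex_on_const[THEN iffD2]]
  by (intro convex_on_cmul) auto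

lemma concave_on_relu_ridge:
  assumes "a \<le> 0"
  shows "concave_on UNIV (\<lambda>t::real. a * max (a * t + b) 0)"
  using convex_on_cmul[of "- a" UNIV "\<lambda>t. max (a * t + b) 0"] assms
    convex_on_max[OF convex_on_affine_real convex_on_const[THEN iffD2]]
  by (simp add: concave_on_def)

lemma mono_convex_imp_middle_increment_bounded:
  assumes "mono f" and "convex_on UNIV f"
  shows "middle_increment_bounded f"
  unfolding middle_increment_bounded_def
proof (intro allI impI)
  fix t h :: real
  assume "0 \<le> h"
  have "f (t - h) \<le> f t" using \<open>mono f\<close> \<open>0 \<le> h\<close> by (simp add: monoD)
  moreover have "f (t + h) \<le> (1 - 1/2) * f t + 1/2 * f (t + 2 * h)"
  proof -
    have "t + h = (1 - 1/2) *\<^sub>R t + (1/2) *\<^sub>R (t + 2 * h)" by (simp add: field_simps)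
    then show ?thesis using convex_onD[OF assms(2), of "1/2" t "t + 2 * h"] by simp
  qed
  ultimately show "f (t + h) - f t \<le> (f t - f (t - h)) + (f (t + 2 * h) - f (t + h))"
    by simp
qed

lemma mono_concave_imp_middle_increment_bounded:
  assumes "mono f" and "concave_on UNIV f"
  shows "middle_increment_bounded f"
  unfolding middle_increment_bounded_def
proof (intro allI impI)
  fix t h :: real
  assume "0 \<le> h"
  have "f (t + h) \<le> f (t + 2 * h)" using \<open>mono f\<close> \<open>0 \<le> h\<close> by (simp add: monoD)
  moreover have "(1 - 1/2) * f (t - h) + 1/2 * f (t + h) \<le> f t"
  proof -
    have "t = (1 - 1/2) *\<^sub>R (t - h) + (1/2) *\<^sub>R (t + h)" by (simp add: field_simps)
    then show ?thesis using concave_onD[OF assms(2), of "1/2" "t - h" "t + h"] by simp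
  qed
  ultimately show "f (t + h) - f t \<le> (f t - f (t - h)) + (f (t + 2 * h) - f (t + h))"
    by simp
qed

lemma middle_increment_bounded_relu_ridge:
  "middle_increment_bounded (\<lambda>t. a * max (a * t + b) 0)"
proof (cases "0 \<le> a")
  case True
  then show ?thesis
    by (intro mono_convex_imp_middle_increment_bounded mono_relu_ridge convex_on_relu_ridge)
next
  case False
  then show ?thesis
    by (intro mono_concave_imp_middle_increment_bounded mono_relu_ridge concave_on_relu_ridge) simp
qed

lemma middle_increment_bounded_sum:
  assumes "\<And>i. i \<in> I \<Longrightarrow> middle_increment_bounded (f i)"
  shows "middle_increment_bounded (\<lambda>t. \<Sum>i\<in>I. f i t)"
  using assms unfolding middle_increment_bounded_def
  by (auto simp flip: sum_subtractf sum.distrib intro: sum_mono)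

lemma middle_increment_bounded_relu_net_along_line:
  fixes e x0 :: "'a::real_inner"
  shows "middle_increment_bounded
           (\<lambda>t. e \<bullet> (\<Sum>i\<in>I. max (w i \<bullet> (x0 + t *\<^sub>R e) - b i) 0 *\<^sub>R w i))"
proof -
  have "e \<bullet> (\<Sum>i\<in>I. max (w i \<bullet> (x0 + t *\<^sub>R e) - b i) 0 *\<^sub>R w i)
      = (\<Sum>i\<in>I. (w i \<bullet> e) * max ((w i \<bullet> e) * t + (w i \<bullet> x0 - b i)) 0)" for t
    by (simp add: inner_sum_right inner_commute algebra_simps)
  then show ?thesis
    by (simp add: middle_increment_bounded_sum middle_increment_bounded_relu_ridge)
qed

lemma ramp_violates_middle_increment_bound:
  fixes S :: "real \<Rightarrow> real"
  assumes "middle_increment_bounded S" and "0 < d"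
  shows "\<exists>t\<in>{-d, 0, d, 2 * d}. d / 6 \<le> \<bar>min (max t 0) d - S t\<bar>"
proof (rule ccontr)
  assume "\<not> ?thesis"
  then have "\<bar>S (-d)\<bar> < d / 6" "\<bar>S 0\<bar> < d / 6" "\<bar>d - S d\<bar> < d / 6" "\<bar>d - S (2 * d)\<bar> < d / 6"
    using \<open>0 < d\<close> by auto
  moreover have "S d - S 0 \<le> (S 0 - S (-d)) + (S (2 * d) - S d)"
    using assms(1) \<open>0 < d\<close> unfolding middle_increment_bounded_def
    by (metis add_0 diff_0 less_eq_real_def)
  ultimately show False unfolding abs_less_iff by linarith
qed

lemma lip_incr_clamp: "lip_incr (\<lambda>s. min (max (s - c) 0) d)"
  unfolding lip_incr_def
proof
  show "mono (\<lambda>s. min (max (s - c) 0) d)" by (auto intro: monoI)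
  have "1-lipschitz_on UNIV (\<lambda>s. min (max (s - c) 0) d)"
    by (rule lipschitz_onI) (auto simp: dist_real_def)
  then show "\<exists>L. L-lipschitz_on UNIV (\<lambda>s. min (max (s - c) 0) d)" by blast
qed

lemma ridge_in_E_Rd:
  assumes "lip_incr \<sigma>"
  shows "(\<lambda>x. \<sigma> (w \<bullet> x) *\<^sub>R w) \<in> E_Rd"
  unfolding E_Rd_def using assms
  by (intro CollectI exI[of _ 1] exI[of _ "\<lambda>_. w"] exI[of _ "\<lambda>_. \<sigma>"]) auto

lemma norm_le_sup_dist_restrict:
  assumes "compact \<Omega>" "continuous_on \<Omega> f" "continuous_on \<Omega> g" "x \<in> \<Omega>"
  shows "norm (f x - g x) \<le> sup_dist \<Omega> (restrict f \<Omega>) (restrict g \<Omega>)"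
proof -
  have "bdd_above ((\<lambda>x. norm (f x - g x)) ` \<Omega>)"
    using assms(1-3)
    by (intro bounded_imp_bdd_above compact_imp_bounded compact_continuous_image continuous_intros)
  then have "norm (f x - g x) \<le> (SUP y\<in>\<Omega>. norm (f y - g y))"
    using assms(4) by (rule cSUP_upper[rotated])
  also have "\<dots> = sup_dist \<Omega> (restrict f \<Omega>) (restrict g \<Omega>)"
    unfolding sup_dist_def by (rule SUP_cong) auto
  finally show ?thesis .
qed

lemma ramp_ridge_far_from_relu_on:
  fixes \<Omega> :: "(real^'d) set"
  assumes "compact \<Omega>" and e: "norm e = 1" and "0 < d"
    and line: "\<And>t. t \<in> {-d, 0, d, 2 * d} \<Longrightarrow> x0 + t *\<^sub>R e \<in> \<Omega>"
    and "g \<in> relu_on \<Omega>"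
  shows "d / 6 \<le> sup_dist \<Omega> (restrict (\<lambda>x. min (max (e \<bullet> x - e \<bullet> x0) 0) d *\<^sub>R e) \<Omega>) g"
proof -
  define F where "F = (\<lambda>x. min (max (e \<bullet> x - e \<bullet> x0) 0) d *\<^sub>R e)"
  obtain p and w :: "nat \<Rightarrow> real^'d" and b
    where g: "g = restrict (\<lambda>x. \<Sum>i<p. max (w i \<bullet> x - b i) 0 *\<^sub>R w i) \<Omega>"
    using \<open>g \<in> relu_on \<Omega>\<close> unfolding relu_on_def by blast
  let ?G = "\<lambda>x. \<Sum>i<p. max (w i \<bullet> x - b i) 0 *\<^sub>R w i"
  obtain t where t: "t \<in> {-d, 0, d, 2 * d}"
    and far: "d / 6 \<le> \<bar>min (max t 0) d - e \<bullet> ?G (x0 + t *\<^sub>R e)\<bar>"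
    using ramp_violates_middle_increment_bound[OF middle_increment_bounded_relu_net_along_line \<open>0 < d\<close>]
    by blast
  let ?x = "x0 + t *\<^sub>R e"
  have "min (max t 0) d - e \<bullet> ?G ?x = e \<bullet> (F ?x - ?G ?x)"
    using e by (simp add: F_def inner_diff_right inner_add_right dot_square_norm)
  also have "\<bar>\<dots>\<bar> \<le> norm (F ?x - ?G ?x)"
    using Cauchy_Schwarz_ineq2[of e] e by simp
  also have "\<dots> \<le> sup_dist \<Omega> (restrict F \<Omega>) g"
    unfolding g F_def using assms(1) line[OF t]
    by (intro norm_le_sup_dist_restrict continuous_intros)
  finally show ?thesis using far unfolding F_def by linarith
qed

theorem proposition3:
  fixes \<Omega> :: "(real^'d) set"
  assumes "compact \<Omega>" and "interior \<Omega> \<noteq> {}"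
  shows "\<not> (\<forall>f\<in>E_on \<Omega>. \<forall>\<epsilon>>0. \<exists>g\<in>relu_on \<Omega>. sup_dist \<Omega> f g < \<epsilon>)"
proof
  assume dense: "\<forall>f\<in>E_on \<Omega>. \<forall>\<epsilon>>0. \<exists>g\<in>relu_on \<Omega>. sup_dist \<Omega> f g < \<epsilon>"
  obtain x0 r where "0 < r" and ball: "ball x0 r \<subseteq> \<Omega>"
    using assms(2) mem_interior by blast
  obtain e :: "real^'d" where e: "norm e = 1" using vector_choose_size[of 1] by auto
  define d where "d = r / 3"
  have "0 < d" using \<open>0 < r\<close> by (simp add: d_def)
  have line: "x0 + t *\<^sub>R e \<in> \<Omega>" if "t \<in> {-d, 0, d, 2 * d}" for t
    using that ball e \<open>0 < r\<close> by (auto simp: d_def dist_norm)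
  define F where "F = (\<lambda>x. min (max (e \<bullet> x - e \<bullet> x0) 0) d *\<^sub>R e)"
  have "restrict F \<Omega> \<in> E_on \<Omega>"
    unfolding E_on_def F_def using ridge_in_E_Rd[OF lip_incr_clamp] by blast
  moreover have "0 < d / 6" using \<open>0 < d\<close> by simp
  ultimately obtain g where "g \<in> relu_on \<Omega>" and "sup_dist \<Omega> (restrict F \<Omega>) g < d / 6"
    using dense by blast
  with ramp_ridge_far_from_relu_on[OF assms(1) e \<open>0 < d\<close> line] show False
    unfolding F_def by fastforce
qed

end
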